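(* Let $\mathcal{X}$ be a measurable space, $K\ge1$, and let classifiers be measurable maps $\mathcal{X}\to[K]$. Let $\mathcal{B}$ assign to each $x$ a set $\mathcal{B}(x)\subseteq\mathcal{X}$ and let $\mathcal{N}(V)=\{x:\exists x'\in V,\ \mathcal{B}(x)\cap\mathcal{B}(x')\neq\emptyset\}$. Let $Q$ be a probability measure on $\mathcal{X}$ satisfying the $c$-expansion property for a non-increasing $c:[0,1]\to(0,\infty)$, i.e. $Q(\mathcal{N}(S))\ge c(Q(S))Q(S)$ for every measurable $S$. Let $F,H,G_{pl}$ be classifiers, $\gamma_H=c(Q(\{x:G_{pl}(x)\neq H(x)\}))$, and assume $\gamma_H>1$. Let $\mathcal{S}_{\mathcal{B}}(F)=\{x:F(x)=F(x')\ \forall x'\in\mathcal{B}(x)\}$ (similarly for $H$), with complements $\mathcal{S}_{\mathcal{B}}^c(\cdot)$; let $\mathcal{M}(F)=\{x:F(x)\neq H(x)\}$, $\mathcal{M}(G_{pl})=\{x:G_{pl}(x)\neq H(x)\}$, $\mathcal{M}_{pl}(F)=\{x:F(x)\neq G_{pl}(x)\}$. Define $$q=\frac{Q\big(\mathcal{M}_{pl}(F)\cup\mathcal{S}_{\mathcal{B}}^c(F)\cup\mathcal{S}_{\mathcal{B}}^c(H)\big)}{\gamma_H-1}.$$ Then $Q\big(\mathcal{S}_{\mathcal{B}}(F)\cap\mathcal{S}_{\mathcal{B}}(H)\cap\mathcal{M}(G_{pl})\cap\mathcal{M}(F)\big)\le q$. In particular, with $\mathcal{N}_1=\{x\in\mathcal{S}_{\mathcal{B}}(F)\cap\mathcal{S}_{\mathcal{B}}(H):F(x)=G_{pl}(x),\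 G_{pl}(x)\neq H(x)\}$ and $\mathcal{N}_2=\{x\in\mathcal{S}_{\mathcal{B}}(F)\cap\mathcal{S}_{\mathcal{B}}(H):F(x)\neq G_{pl}(x),\ G_{pl}(x)\neq H(x),\ F(x)\neq H(x)\}$, we have $Q(\mathcal{N}_1\cup\mathcal{N}_2)\le q$.
   Context: All sets are assumed measurable. *)

theory Defs
  imports "HOL-Probability.Probability"
begin

definition nbhd :: "'a measure \<Rightarrow> ('a \<Rightarrow> 'a set) \<Rightarrow> 'a set \<Rightarrow> 'a set" where
  "nbhd Q B V = {x \<in> space Q. \<exists>x'\<in>V. B x \<inter> B x' \<noteq> {}}"

definition expansion :: "'a measure \<Rightarrow> ('a \<Rightarrow> 'a set) \<Rightarrow> (real \<Rightarrow> real) \<Rightarrow> bool" where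
  "expansion Q B c \<longleftrightarrow> (\<forall>S\<in>sets Q. measure Q (nbhd Q B S) \<ge> c (measure Q S) * measure Q S)"

definition robust :: "'a measure \<Rightarrow> ('a \<Rightarrow> 'a set) \<Rightarrow> ('a \<Rightarrow> nat) \<Rightarrow> 'a set" where
  "robust Q B F = {x \<in> space Q. \<forall>x'\<in>B x. F x = F x'}"

end

theory Submission
  imports Defs
begin

text \<open>Among points robust for both F and H, disagreement of F and H passes to every point whose
  perturbation set meets that of a disagreeing point. So the neighbourhood of the set A of robust
  common mistakes of F and G leaves A only into the set E where F or H is non-robust or F differs
  from G. As A lies inside the mistakes of G and c is non-increasing, A expands by a factor of at
  least \<gamma> = c(Q(G \<noteq> H)) > 1, whence (\<gamma> - 1) Q(A) \<le> Q(E).\<close>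

lemma sets_Collect_neq_count_space:
  assumes "countable A" "f \<in> measurable M (count_space A)" "g \<in> measurable M (count_space A)"
  shows "{x \<in> space M. f x \<noteq> g x} \<in> sets M"
proof -
  have "{x \<in> space M. f x \<noteq> g x} = (\<Union>i\<in>A. (f -` {i} \<inter> space M) - (g -` {i} \<inter> space M))"
    using measurable_space[OF assms(2)] by auto
  also have "\<dots> \<in> sets M"
    using assms by (intro sets.countable_UN'' sets.Diff) (auto intro: measurable_sets)
  finally show ?thesis .
qed

lemma measure_le_of_expansion:
  assumes "prob_space Q" "expansion Q B c" "antimono_on {0..1} c"
    and "A \<in> sets Q" "E \<in> sets Q" "M \<in> sets Q" "A \<subseteq> M"
    and "nbhd Q B A \<subseteq> A \<union> E" "c (measure Q M) > 1"
  shows "measure Q A \<le> measure Q E / (c (measure Q M) - 1)"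
proof -
  interpret prob_space Q by fact
  have "c (measure Q A) * measure Q A \<le> measure Q (nbhd Q B A)"
    using assms(2,4) unfolding expansion_def by blast
  also have "\<dots> \<le> measure Q (A \<union> E)"
    using assms(4,5,8) by (intro finite_measure_mono) auto
  also have "\<dots> \<le> measure Q A + measure Q E"
    using assms(4,5) by (intro measure_subadditive) auto
  finally have excess: "(c (measure Q A) - 1) * measure Q A \<le> measure Q E"
    by (simp add: algebra_simps)
  have "measure Q A \<le> measure Q M"
    using assms(6,7) by (intro finite_measure_mono)
  then have "c (measure Q M) \<le> c (measure Q A)"
    using assms(3) by (auto intro: monotone_onD)
  then have "(c (measure Q M) - 1) * measure Q A \<le> (c (measure Q A) - 1) * measure Q A"
    by (intro mult_right_mono) auto
  with excess show ?thesis
    using assms(9) by (simp add: field_simps)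
qed

lemma robust_disagreement_spreads:
  assumes "x \<in> robust Q B F \<inter> robust Q B H" "y \<in> robust Q B F \<inter> robust Q B H"
    and "B x \<inter> B y \<noteq> {}" "F y \<noteq> H y"
  shows "F x \<noteq> H x"
proof -
  obtain z where "z \<in> B x" "z \<in> B y" using assms(3) by blast
  then have "F x = F y" "H x = H y"
    using assms(1,2) unfolding robust_def by auto
  then show ?thesis using assms(4) by simp
qed

lemma nbhd_robust_mistakes_subset:
  fixes Q :: "'a measure" and B :: "'a \<Rightarrow> 'a set" and F G H :: "'a \<Rightarrow> nat"
  defines "A \<equiv> robust Q B F \<inter> robust Q B H \<inter> {x \<in> space Q. G x \<noteq> H x} \<inter> {x \<in> space Q. F x \<noteq> H x}"
  shows "nbhd Q B A \<subseteq> A \<union> ({x \<in> space Q. F x \<noteq> G x} \<union> (space Q - robust Q B F) \<union> (space Q - robust Q B H))"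
    (is "_ \<subseteq> A \<union> ?E")
proof
  fix x assume "x \<in> nbhd Q B A"
  then obtain y where x: "x \<in> space Q" and y: "y \<in> A" and "B x \<inter> B y \<noteq> {}"
    unfolding nbhd_def by blast
  show "x \<in> A \<union> ?E"
  proof (cases "x \<in> robust Q B F \<inter> robust Q B H")
    case True
    with y \<open>B x \<inter> B y \<noteq> {}\<close> have "F x \<noteq> H x"
      unfolding A_def by (intro robust_disagreement_spreads[of x Q B F H y]) auto
    then show ?thesis using True x unfolding A_def by auto
  qed (use x in auto)
qed

theorem mainTheorem3:
  fixes Q :: "'a measure" and B :: "'a \<Rightarrow> 'a set" and c :: "real \<Rightarrow> real"
    and K :: nat and F H G :: "'a \<Rightarrow> nat"
  assumes "prob_space Q"
    and "K \<ge> 1"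
    and "\<And>x. x \<in> space Q \<Longrightarrow> B x \<subseteq> space Q"
    and "\<And>S. S \<in> sets Q \<Longrightarrow> nbhd Q B S \<in> sets Q"
    and "\<And>t. t \<in> {0..1} \<Longrightarrow> c t > 0"
    and "\<And>s t. s \<in> {0..1} \<Longrightarrow> t \<in> {0..1} \<Longrightarrow> s \<le> t \<Longrightarrow> c t \<le> c s"
    and "expansion Q B c"
    and "F \<in> measurable Q (count_space {1..K})"
    and "H \<in> measurable Q (count_space {1..K})"
    and "G \<in> measurable Q (count_space {1..K})"
    and "robust Q B F \<in> sets Q"
    and "robust Q B H \<in> sets Q"
    and "c (measure Q {x \<in> space Q. G x \<noteq> H x}) > 1"
  shows "measure Q (robust Q B F \<inter> robust Q B H \<inter> {x \<in> space Q. G x \<noteq> H x}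
                     \<inter> {x \<in> space Q. F x \<noteq> H x})
           \<le> measure Q ({x \<in> space Q. F x \<noteq> G x} \<union> (space Q - robust Q B F)
                          \<union> (space Q - robust Q B H))
             / (c (measure Q {x \<in> space Q. G x \<noteq> H x}) - 1)
       \<and> measure Q ({x \<in> robust Q B F \<inter> robust Q B H. F x = G x \<and> G x \<noteq> H x}
                   \<union> {x \<in> robust Q B F \<inter> robust Q B H. F x \<noteq> G x \<and> G x \<noteq> H x \<and> F x \<noteq> H x})
           \<le> measure Q ({x \<in> space Q. F x \<noteq> G x} \<union> (space Q - robust Q B F)
                          \<union> (space Q - robust Q B H))
             / (c (measure Q {x \<in> space Q. G x \<noteq> H x}) - 1)"
proof -
  interpret prob_space Q by fact
  define M where "M = {x \<in> space Q. G x \<noteq> H x}"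
  define A where "A = robust Q B F \<inter> robust Q B H \<inter> M \<inter> {x \<in> space Q. F x \<noteq> H x}"
  define E where "E = {x \<in> space Q. F x \<noteq> G x} \<union> (space Q - robust Q B F) \<union> (space Q - robust Q B H)"
  have M_sets: "M \<in> sets Q"
    unfolding M_def using assms(9,10) by (intro sets_Collect_neq_count_space) auto
  have "{x \<in> space Q. F x \<noteq> H x} \<in> sets Q" "{x \<in> space Q. F x \<noteq> G x} \<in> sets Q"
    using assms(8-10) by (auto intro: sets_Collect_neq_count_space)
  then have "A \<in> sets Q" "E \<in> sets Q"
    unfolding A_def E_def using M_sets assms(11,12) by auto
  moreover have "antimono_on {0..1} c"
    using assms(6) by (intro monotone_onI) auto
  ultimately have bound: "measure Q A \<le> measure Q E / (c (measure Q M) - 1)"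
    using assms(1,7,13) M_sets nbhd_robust_mistakes_subset[of Q B F H G]
    unfolding A_def E_def M_def by (intro measure_le_of_expansion) auto
  have "measure Q ({x \<in> robust Q B F \<inter> robust Q B H. F x = G x \<and> G x \<noteq> H x}
                   \<union> {x \<in> robust Q B F \<inter> robust Q B H. F x \<noteq> G x \<and> G x \<noteq> H x \<and> F x \<noteq> H x})
        \<le> measure Q A"
    using \<open>A \<in> sets Q\<close> unfolding A_def M_def robust_def by (intro finite_measure_mono) auto
  with bound show ?thesis
    unfolding A_def E_def M_def by linarith
qed

end
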